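(* Let $C$ be a commutative ring and let $R$ be a $C$-algebra satisfying the condition (NK). Then there exist elements $x,y\in R$ such that, letting $S$ be the $C$-subalgebra of $R$ generated by $\{x,y\}$, both $x$ and $y$ are principally nilpotent in $S$ (i.e. $xS$ and $yS$ are nil right ideals of $S$), but $x+y$ is not nilpotent.
   Context: All rings are associative with unit. A $C$-algebra is a ring $R$ together with a subring $C$ contained in the center of $R$. A right ideal is nil if all its elements are nilpotent. A ring satisfies the condition (NK) if it contains two nil right ideals whose sum is not nil. An element $a$ of a ring $R$ is principally nilpotent if the right ideal $aR$ is nil. *)

theory Defs
  imports Main
begin

definition is_nilpotent :: "'a::ring_1 \<Rightarrow> bool" where
  "is_nilpotent a \<longleftrightarrow> (\<exists>n::nat. a ^ n = 0)"

definition is_subring :: "'a::ring_1 set \<Rightarrow> bool" where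
  "is_subring A \<longleftrightarrow> 0 \<in> A \<and> 1 \<in> A \<and>
     (\<forall>a\<in>A. \<forall>b\<in>A. a + b \<in> A \<and> a * b \<in> A) \<and> (\<forall>a\<in>A. - a \<in> A)"

definition ring_center :: "'a::ring_1 set" where
  "ring_center = {c. \<forall>r. c * r = r * c}"

definition is_C_algebra :: "'a::ring_1 set \<Rightarrow> bool" where
  "is_C_algebra C \<longleftrightarrow> is_subring C \<and> C \<subseteq> ring_center"

definition is_right_ideal_in :: "'a::ring_1 set \<Rightarrow> 'a set \<Rightarrow> bool" where
  "is_right_ideal_in S I \<longleftrightarrow> I \<subseteq> S \<and> 0 \<in> I \<and>
     (\<forall>a\<in>I. \<forall>b\<in>I. a + b \<in> I) \<and> (\<forall>a\<in>I. - a \<in> I) \<and>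
     (\<forall>a\<in>I. \<forall>s\<in>S. a * s \<in> I)"

definition is_nil :: "'a::ring_1 set \<Rightarrow> bool" where
  "is_nil I \<longleftrightarrow> (\<forall>a\<in>I. is_nilpotent a)"

definition ideal_sum :: "'a::ring_1 set \<Rightarrow> 'a set \<Rightarrow> 'a set" where
  "ideal_sum I J = {a + b | a b. a \<in> I \<and> b \<in> J}"

definition NK :: "'a::ring_1 itself \<Rightarrow> bool" where
  "NK _ \<longleftrightarrow> (\<exists>I J :: 'a set. is_right_ideal_in UNIV I \<and> is_right_ideal_in UNIV J \<and>
     is_nil I \<and> is_nil J \<and> \<not> is_nil (ideal_sum I J))"

definition gen_subalgebra :: "'a::ring_1 set \<Rightarrow> 'a set \<Rightarrow> 'a set" where
  "gen_subalgebra C X = \<Inter> {A. is_subring A \<and> C \<subseteq> A \<and> X \<subseteq> A}"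

definition principally_nilpotent_in :: "'a::ring_1 set \<Rightarrow> 'a \<Rightarrow> bool" where
  "principally_nilpotent_in S a \<longleftrightarrow> is_nil ((\<lambda>s. a * s) ` S)"

end

theory Submission
  imports Defs
begin

text \<open>If \<open>x\<close> lies in a nil right ideal \<open>I\<close> of \<open>R\<close>, then \<open>xS \<subseteq> xR \<subseteq> I\<close> is nil for every
  subring \<open>S\<close>. So it suffices to take \<open>x \<in> I\<close>, \<open>y \<in> J\<close> with \<open>x + y\<close> not nilpotent, which (NK)
  provides.\<close>

lemma mem_gen_subalgebra: "x \<in> X \<Longrightarrow> x \<in> gen_subalgebra C X"
  unfolding gen_subalgebra_def by blast

lemma principally_nilpotent_in_if_mem_nil_right_ideal:
  assumes "is_right_ideal_in UNIV I" and "is_nil I" and "a \<in> I"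
  shows "principally_nilpotent_in S a"
proof -
  have "(\<lambda>s. a * s) ` S \<subseteq> I"
    using assms(1,3) unfolding is_right_ideal_in_def by blast
  then show ?thesis
    using assms(2) unfolding principally_nilpotent_in_def is_nil_def by blast
qed

lemma NK_imp_non_nilpotent_sum:
  assumes "NK TYPE('a::ring_1)"
  shows "\<exists>I J :: 'a set. \<exists>a b. is_right_ideal_in UNIV I \<and> is_right_ideal_in UNIV J \<and>
    is_nil I \<and> is_nil J \<and> a \<in> I \<and> b \<in> J \<and> \<not> is_nilpotent (a + b)"
  using assms unfolding NK_def is_nil_def ideal_sum_def by blast

theorem mainTheorem1:
  fixes C :: "'a::ring_1 set"
  assumes "is_C_algebra C"
    and "NK TYPE('a)"
  shows "\<exists>x y :: 'a. x \<in> gen_subalgebra C {x, y} \<and> y \<in> gen_subalgebra C {x, y} \<and>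
           principally_nilpotent_in (gen_subalgebra C {x, y}) x \<and>
           principally_nilpotent_in (gen_subalgebra C {x, y}) y \<and>
           \<not> is_nilpotent (x + y)"
proof -
  obtain I J :: "'a set" and a b
    where "is_right_ideal_in UNIV I" "is_right_ideal_in UNIV J" "is_nil I" "is_nil J"
      and "a \<in> I" "b \<in> J" "\<not> is_nilpotent (a + b)"
    using NK_imp_non_nilpotent_sum [OF assms(2)] by blast
  then show ?thesis
    using principally_nilpotent_in_if_mem_nil_right_ideal mem_gen_subalgebra
    by (metis insertI1 insertI2)
qed

end
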